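(* For two nonempty convex sets $A\subseteq B\subseteq\mathbb{R}^d_{\geq 0}$ where $A$ is down-closed, $\operatorname{rdist}(A,B)=\operatorname{LPgapMax}(A,B)$.
   Context: A convex set $C\subseteq\mathbb{R}^d_{\geq0}$ is down-closed if $x\in C$, $y\in\mathbb{R}^d_{\geq0}$, $y\leq x$ imply $y\in C$. $\operatorname{LPgapMax}(A,B)=\inf\{\varepsilon\geq0: (1+\varepsilon)\sup_{a\in A}c^\intercal a\geq\sup_{b\in B}c^\intercal b\ \ \forall c\in\mathbb{R}^d_{\geq0}\}$. For nonempty convex $A\subseteq B\subseteq\mathbb{R}^d$, $\operatorname{rdist}(A,B)=\sup_{\pi}\frac{\sup_{b\in B}\inf_{a\in A}|\pi(b)-\pi(a)|}{\sup_{a,a'\in A}|\pi(a)-\pi(a')|}$ over all linear $\pi:\mathbb{R}^d\to\mathbb{R}$, with fractions having denominator $\infty$ and $0/0$ interpreted as $0$. *)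

theory Defs
  imports "HOL-Analysis.Analysis"
begin

text \<open>Vectors in R^d are modelled as real^'d for a finite index type 'd.
  Extended reals are used since suprema/infima may be infinite.\<close>

definition nonneg_vec :: "real^'d \<Rightarrow> bool" where
  "nonneg_vec x \<longleftrightarrow> (\<forall>i. 0 \<le> x $ i)"

definition down_closed :: "(real^'d) set \<Rightarrow> bool" where
  "down_closed C \<longleftrightarrow>
     (\<forall>x\<in>C. \<forall>y. nonneg_vec y \<and> (\<forall>i. y $ i \<le> x $ i) \<longrightarrow> y \<in> C)"

definition LPgapMax :: "(real^'d) set \<Rightarrow> (real^'d) set \<Rightarrow> ereal" where
  "LPgapMax A B = Inf {ereal eps | eps. eps \<ge> 0 \<and>
     (\<forall>c. nonneg_vec c \<longrightarrow>
        ereal (1 + eps) * (SUP a\<in>A. ereal (inner c a)) \<ge> (SUP b\<in>B. ereal (inner c b)))}"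

definition rfrac :: "ereal \<Rightarrow> ereal \<Rightarrow> ereal" where
  "rfrac n d = (if d = \<infinity> then 0 else if d = 0 then (if n = 0 then 0 else \<infinity>) else n / d)"

definition rdist :: "(real^'d) set \<Rightarrow> (real^'d) set \<Rightarrow> ereal" where
  "rdist A B = (SUP \<pi>\<in>{\<pi> :: real^'d \<Rightarrow> real. linear \<pi>}.
     rfrac (SUP b\<in>B. INF a\<in>A. ereal \<bar>\<pi> b - \<pi> a\<bar>)
           (SUP p\<in>A \<times> A. ereal \<bar>\<pi> (fst p) - \<pi> (snd p)\<bar>))"

end

theory Submission
  imports Defs
begin

(* For c >= 0, down-closedness puts 0 into A, so the width of A along <c,-> is its support
   value h_A(c), while points of B lie at distance at least h_B(c) - h_A(c) from it; this gives
   LPgapMax <= rdist. Conversely, for an arbitrary functional c, zeroing the coordinates of a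
   point of A where c is negative keeps it in A and turns <c,-> into <c+,->. Hence the projection
   of A is an interval reaching up to (almost) h_A(c+) and down to -h_A(c-), both at most the
   width w, whereas B projects into [-(1+eps) h_A(c-), (1+eps) h_A(c+)]: every point of B
   projects within eps w of the projection of A. *)

definition proj_width :: "('a \<Rightarrow> real) \<Rightarrow> 'a set \<Rightarrow> ereal" where
  "proj_width \<pi> A = (SUP p\<in>A \<times> A. ereal \<bar>\<pi> (fst p) - \<pi> (snd p)\<bar>)"

definition proj_excess :: "('a \<Rightarrow> real) \<Rightarrow> 'a set \<Rightarrow> 'a set \<Rightarrow> ereal" where
  "proj_excess \<pi> A B = (SUP b\<in>B. INF a\<in>A. ereal \<bar>\<pi> b - \<pi> a\<bar>)"

definition support_fun :: "'a::real_inner \<Rightarrow> 'a set \<Rightarrow> ereal" where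
  "support_fun c A = (SUP a\<in>A. ereal (inner c a))"

definition lp_gap_feasible :: "(real^'d) set \<Rightarrow> (real^'d) set \<Rightarrow> real \<Rightarrow> bool" where
  "lp_gap_feasible A B eps \<longleftrightarrow> 0 \<le> eps \<and>
     (\<forall>c. nonneg_vec c \<longrightarrow> support_fun c B \<le> ereal (1 + eps) * support_fun c A)"

definition vec_pos :: "real^'d \<Rightarrow> real^'d" where
  "vec_pos c = (\<chi> i. max (c $ i) 0)"

lemma rdist_eq_SUP_rfrac:
  "rdist A B = (SUP \<pi>\<in>{\<pi>. linear \<pi>}. rfrac (proj_excess \<pi> A B) (proj_width \<pi> A))"
  by (simp add: rdist_def proj_excess_def proj_width_def)

lemma LPgapMax_eq_Inf_feasible:
  "LPgapMax A B = Inf (ereal ` Collect (lp_gap_feasible A B))"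
  unfolding LPgapMax_def lp_gap_feasible_def support_fun_def
  by (rule arg_cong[where f = Inf]) auto

lemma linear_eq_inner_adjoint:
  fixes \<pi> :: "'a::euclidean_space \<Rightarrow> real"
  assumes "linear \<pi>"
  shows "\<pi> = inner (adjoint \<pi> 1)"
  using adjoint_works[OF assms, of _ 1] by (auto simp: inner_commute)

lemma inner_nonneg_if_nonneg_vec:
  assumes "nonneg_vec c" "nonneg_vec x"
  shows "0 \<le> inner c x"
  using assms unfolding nonneg_vec_def inner_vec_def by (intro sum_nonneg) simp

lemma nonneg_vec_vec_pos: "nonneg_vec (vec_pos c)"
  by (simp add: nonneg_vec_def vec_pos_def)

lemma inner_le_inner_vec_pos:
  assumes "nonneg_vec x"
  shows "inner c x \<le> inner (vec_pos c) x"
  using assms unfolding nonneg_vec_def inner_vec_def vec_pos_def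
  by (intro sum_mono) (simp add: mult_right_mono)

lemma inner_restrict_eq_inner_vec_pos:
  "inner c (\<chi> i. if 0 \<le> c $ i then x $ i else 0) = inner (vec_pos c) x"
  unfolding inner_vec_def vec_pos_def by (intro sum.cong) auto

lemma down_closed_restrict_mem:
  assumes "down_closed A" "a \<in> A" "nonneg_vec a"
  shows "(\<chi> i. if P i then a $ i else 0) \<in> A"
  using assms unfolding down_closed_def nonneg_vec_def by auto

lemma down_closed_zero_mem:
  fixes A :: "(real^'d) set"
  assumes "down_closed A" "a \<in> A" "nonneg_vec a"
  shows "0 \<in> A"
proof -
  have "nonneg_vec (0 :: real^'d)" "\<forall>i. (0 :: real^'d) $ i \<le> a $ i"
    using assms(3) by (simp_all add: nonneg_vec_def)
  with assms(1,2) show ?thesis unfolding down_closed_def by blast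
qed

lemma convex_real_close_point:
  fixes S :: "real set"
  assumes "convex S" "s \<in> S" "s' \<in> S" "0 \<le> t" "s' - t \<le> x" "x \<le> s + t"
  shows "\<exists>y\<in>S. \<bar>x - y\<bar> \<le> t"
proof -
  consider "s < x" | "x < s'" | "s' \<le> x" "x \<le> s" by linarith
  then show ?thesis
  proof cases
    case 1
    with assms(2,6) show ?thesis by (intro bexI[of _ s]) auto
  next
    case 2
    with assms(3,5) show ?thesis by (intro bexI[of _ s']) auto
  next
    case 3
    have "is_interval S" using assms(1) by (simp add: is_interval_convex_1)
    then have "x \<in> S" using mem_is_interval_1_I assms(2,3) 3 by blast
    with assms(4) show ?thesis by (intro bexI[of _ x]) auto
  qed
qed

lemma rfrac_le_ereal_iff:
  assumes "0 \<le> n" "0 \<le> d" "d \<noteq> \<infinity>" "0 \<le> r"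
  shows "rfrac n d \<le> ereal r \<longleftrightarrow> n \<le> ereal r * d"
proof (cases "d = 0")
  case True
  with assms show ?thesis by (auto simp: rfrac_def)
next
  case False
  with assms obtain e where d: "d = ereal e" "0 < e" by (cases d) auto
  then have "rfrac n d = n / ereal e" by (simp add: rfrac_def)
  with assms(1) d show ?thesis
    by (cases n) (simp_all add: pos_divide_le_eq mult.commute)
qed

lemma proj_width_nonneg:
  assumes "A \<noteq> {}"
  shows "0 \<le> proj_width \<pi> A"
proof -
  from assms obtain a where "a \<in> A" by blast
  then have "(a, a) \<in> A \<times> A" by blast
  then show ?thesis
    unfolding proj_width_def by (rule SUP_upper2) simp
qed

lemma proj_excess_nonneg:
  assumes "B \<noteq> {}"
  shows "0 \<le> proj_excess \<pi> A B"
proof -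
  from assms obtain b where "b \<in> B" by blast
  then show ?thesis
    unfolding proj_excess_def by (rule SUP_upper2) (auto intro: INF_greatest)
qed

lemma proj_width_uminus: "proj_width (\<lambda>x. - \<pi> x) A = proj_width \<pi> A"
  unfolding proj_width_def by (simp add: abs_minus_commute)

lemma proj_width_inner_eq_support_fun:
  fixes c :: "real^'d"
  assumes "nonneg_vec c" "\<forall>a\<in>A. nonneg_vec a" "0 \<in> A"
  shows "proj_width (inner c) A = support_fun c A"
proof (rule antisym)
  have nonneg: "0 \<le> inner c a" if "a \<in> A" for a
    using assms that inner_nonneg_if_nonneg_vec by blast
  show "proj_width (inner c) A \<le> support_fun c A"
    unfolding proj_width_def
  proof (rule SUP_least, clarify)
    fix a a' assume "a \<in> A" "a' \<in> A"
    then have "\<bar>inner c a - inner c a'\<bar> \<le> max (inner c a) (inner c a')"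
      using nonneg[OF \<open>a \<in> A\<close>] nonneg[OF \<open>a' \<in> A\<close>]
      by (auto simp: abs_le_iff le_max_iff_disj)
    then have "ereal \<bar>inner c a - inner c a'\<bar> \<le> max (ereal (inner c a)) (ereal (inner c a'))"
      by (simp only: ereal_max[symmetric] ereal_less_eq(3))
    also have "\<dots> \<le> support_fun c A"
      unfolding support_fun_def using \<open>a \<in> A\<close> \<open>a' \<in> A\<close> by (auto intro: SUP_upper)
    finally show "ereal \<bar>inner c (fst (a, a')) - inner c (snd (a, a'))\<bar> \<le> support_fun c A"
      by simp
  qed
  show "support_fun c A \<le> proj_width (inner c) A"
    unfolding support_fun_def proj_width_def
  proof (rule SUP_mono)
    fix a assume "a \<in> A"
    with assms(3) have "(a, 0) \<in> A \<times> A" by blast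
    with nonneg[OF \<open>a \<in> A\<close>]
    show "\<exists>m\<in>A \<times> A. ereal (inner c a) \<le> ereal \<bar>inner c (fst m) - inner c (snd m)\<bar>"
      by force
  qed
qed

lemma proj_excess_ge_diff_SUP:
  assumes "(SUP a\<in>A. ereal (\<pi> a)) = ereal s" "b \<in> B"
  shows "ereal (\<pi> b - s) \<le> proj_excess \<pi> A B"
proof -
  have "ereal (\<pi> b - s) \<le> (INF a\<in>A. ereal \<bar>\<pi> b - \<pi> a\<bar>)"
  proof (rule INF_greatest)
    fix a assume "a \<in> A"
    then have "ereal (\<pi> a) \<le> ereal s"
      unfolding assms(1)[symmetric] by (rule SUP_upper)
    then show "ereal (\<pi> b - s) \<le> ereal \<bar>\<pi> b - \<pi> a\<bar>" by simp
  qed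
  also have "\<dots> \<le> proj_excess \<pi> A B"
    unfolding proj_excess_def using assms(2) by (rule SUP_upper)
  finally show ?thesis .
qed

lemma support_fun_le_if_rfrac_le:
  fixes A B :: "(real^'d) set"
  assumes "A \<noteq> {}" "A \<subseteq> B" "\<forall>x\<in>B. nonneg_vec x" "down_closed A"
    and "nonneg_vec c" "0 \<le> r"
    and rfrac_le: "rfrac (proj_excess (inner c) A B) (proj_width (inner c) A) \<le> ereal r"
  shows "support_fun c B \<le> ereal (1 + r) * support_fun c A"
proof -
  have nonneg_A: "\<forall>a\<in>A. nonneg_vec a" using assms(2,3) by blast
  have "0 \<in> A" using assms(1,4) nonneg_A down_closed_zero_mem by blast
  with assms(5) nonneg_A have width: "proj_width (inner c) A = support_fun c A"
    by (rule proj_width_inner_eq_support_fun)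
  show ?thesis
  proof (cases "support_fun c A = \<infinity>")
    case True
    then show ?thesis using \<open>0 \<le> r\<close> by simp
  next
    case False
    have "0 \<le> support_fun c A" using width proj_width_nonneg[OF assms(1)] by metis
    with False obtain s where s: "support_fun c A = ereal s" "0 \<le> s"
      by (cases "support_fun c A") auto
    have excess_le: "proj_excess (inner c) A B \<le> ereal r * ereal s"
      using rfrac_le rfrac_le_ereal_iff[of _ "ereal s" r] proj_excess_nonneg[of B] assms(1,2,6)
      by (auto simp: width s)
    have "ereal (inner c b - s) \<le> ereal r * ereal s" if "b \<in> B" for b
      using s(1) that unfolding support_fun_def
      by (rule order_trans[OF proj_excess_ge_diff_SUP excess_le])
    then have "inner c b \<le> (1 + r) * s" if "b \<in> B" for b
      using that by (simp add: algebra_simps)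
    then show ?thesis
      unfolding support_fun_def s(1)[unfolded support_fun_def] by (auto intro: SUP_least)
  qed
qed

lemma support_fun_vec_pos_le_proj_width:
  fixes c :: "real^'d"
  assumes "down_closed A" "\<forall>a\<in>A. nonneg_vec a" "0 \<in> A"
  shows "support_fun (vec_pos c) A \<le> proj_width (inner c) A"
  unfolding support_fun_def proj_width_def
proof (rule SUP_mono)
  fix a assume "a \<in> A"
  let ?a' = "\<chi> i. if 0 \<le> c $ i then a $ i else 0"
  have mem: "(?a', 0) \<in> A \<times> A"
    using down_closed_restrict_mem[OF assms(1) \<open>a \<in> A\<close>, where P = "\<lambda>i. 0 \<le> c $ i"]
      assms(2,3) \<open>a \<in> A\<close> by blast
  have "0 \<le> inner (vec_pos c) a"
    using assms(2) \<open>a \<in> A\<close> by (simp add: inner_nonneg_if_nonneg_vec nonneg_vec_vec_pos)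
  then have "inner (vec_pos c) a = \<bar>inner c ?a' - inner c 0\<bar>"
    by (simp add: inner_restrict_eq_inner_vec_pos)
  with mem show "\<exists>m\<in>A \<times> A. ereal (inner (vec_pos c) a) \<le> ereal \<bar>inner c (fst m) - inner c (snd m)\<bar>"
    by force
qed

lemma lp_gap_feasible_upper_approx:
  fixes c :: "real^'d"
  assumes "down_closed A" "\<forall>a\<in>A. nonneg_vec a" "0 \<in> A" "lp_gap_feasible A B eps"
    and "proj_width (inner c) A = ereal w" "b \<in> B" "nonneg_vec b" "0 < d"
  shows "\<exists>a\<in>A. inner c b \<le> inner c a + eps * w + d"
proof -
  let ?P = "support_fun (vec_pos c) A"
  have "?P \<le> ereal w"
    using support_fun_vec_pos_le_proj_width[OF assms(1-3), of c] assms(5) by simp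
  moreover have "0 \<le> ?P"
    unfolding support_fun_def using \<open>0 \<in> A\<close> by (auto intro: SUP_upper2)
  ultimately obtain p where p: "?P = ereal p" "p \<le> w" by (cases ?P) auto
  have "ereal (p - d) < ?P" using p \<open>0 < d\<close> by simp
  then obtain a where a: "a \<in> A" "p - d < inner (vec_pos c) a"
    unfolding support_fun_def less_SUP_iff by auto
  let ?a' = "\<chi> i. if 0 \<le> c $ i then a $ i else 0"
  have "?a' \<in> A"
    using down_closed_restrict_mem[OF assms(1) a(1), where P = "\<lambda>i. 0 \<le> c $ i"] assms(2) a(1)
    by blast
  have "ereal (inner (vec_pos c) b) \<le> support_fun (vec_pos c) B"
    unfolding support_fun_def using \<open>b \<in> B\<close> by (rule SUP_upper)
  also have "\<dots> \<le> ereal (1 + eps) * support_fun (vec_pos c) A"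
    using assms(4) nonneg_vec_vec_pos unfolding lp_gap_feasible_def by blast
  finally have "inner (vec_pos c) b \<le> p + eps * p" by (simp add: p(1) distrib_right)
  moreover have "eps * p \<le> eps * w"
    using assms(4) p(2) unfolding lp_gap_feasible_def by (simp add: mult_left_mono)
  moreover have "inner c b \<le> inner (vec_pos c) b"
    using assms(7) by (rule inner_le_inner_vec_pos)
  moreover have "inner c ?a' = inner (vec_pos c) a"
    by (rule inner_restrict_eq_inner_vec_pos)
  ultimately have "inner c b \<le> inner c ?a' + eps * w + d"
    using a(2) by linarith
  with \<open>?a' \<in> A\<close> show ?thesis by blast
qed

lemma proj_excess_le_gap_width:
  fixes A B :: "(real^'d) set"
  assumes "convex A" "down_closed A" "A \<noteq> {}" "A \<subseteq> B" "\<forall>x\<in>B. nonneg_vec x"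
    and "lp_gap_feasible A B eps" "proj_width (inner c) A = ereal w"
  shows "proj_excess (inner c) A B \<le> ereal (eps * w)"
  unfolding proj_excess_def
proof (rule SUP_least)
  fix b assume "b \<in> B"
  have nonneg_A: "\<forall>a\<in>A. nonneg_vec a" using assms(4,5) by blast
  have "0 \<in> A" using assms(2,3) nonneg_A down_closed_zero_mem by blast
  have "0 \<le> eps * w"
    using assms(6) proj_width_nonneg[OF assms(3), of "inner c"] assms(7)
    unfolding lp_gap_feasible_def by simp
  have width_neg: "proj_width (inner (- c)) A = ereal w"
    using proj_width_uminus[of "inner c" A] assms(7) by (simp add: inner_minus_left[abs_def])
  have "nonneg_vec b" using assms(5) \<open>b \<in> B\<close> by blast
  have "convex (inner c ` A)"
    using assms(1) bounded_linear.linear[OF bounded_linear_inner_right]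
    by (rule convex_linear_image[rotated])
  have near: "\<exists>a\<in>A. \<bar>inner c b - inner c a\<bar> \<le> eps * w + d" if d: "0 < d" for d
  proof -
    obtain a1 where "a1 \<in> A" "inner c b \<le> inner c a1 + eps * w + d"
      using lp_gap_feasible_upper_approx[OF assms(2) nonneg_A \<open>0 \<in> A\<close> assms(6,7) \<open>b \<in> B\<close>
          \<open>nonneg_vec b\<close> d] by blast
    moreover obtain a2 where "a2 \<in> A" "inner (- c) b \<le> inner (- c) a2 + eps * w + d"
      using lp_gap_feasible_upper_approx[OF assms(2) nonneg_A \<open>0 \<in> A\<close> assms(6) width_neg \<open>b \<in> B\<close>
          \<open>nonneg_vec b\<close> d] by blast
    ultimately show ?thesis
      using convex_real_close_point[OF \<open>convex (inner c ` A)\<close>, of "inner c a1" "inner c a2"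
          "eps * w + d" "inner c b"] \<open>0 \<le> eps * w\<close> d
      by auto
  qed
  show "(INF a\<in>A. ereal \<bar>inner c b - inner c a\<bar>) \<le> ereal (eps * w)"
  proof (rule ereal_le_epsilon2)
    fix d :: real assume "0 < d"
    with near obtain a where "a \<in> A" "\<bar>inner c b - inner c a\<bar> \<le> eps * w + d" by blast
    then show "(INF a\<in>A. ereal \<bar>inner c b - inner c a\<bar>) \<le> ereal (eps * w) + ereal d"
      by (intro INF_lower2[of a]) auto
  qed
qed

lemma rdist_le_if_lp_gap_feasible:
  fixes A B :: "(real^'d) set"
  assumes "convex A" "down_closed A" "A \<noteq> {}" "A \<subseteq> B" "\<forall>x\<in>B. nonneg_vec x"
    and "lp_gap_feasible A B eps"
  shows "rdist A B \<le> ereal eps"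
  unfolding rdist_eq_SUP_rfrac
proof (rule SUP_least)
  fix \<pi> :: "real^'d \<Rightarrow> real" assume "\<pi> \<in> {\<pi>. linear \<pi>}"
  then obtain c where \<pi>: "\<pi> = inner c" using linear_eq_inner_adjoint by blast
  have "0 \<le> eps" using assms(6) unfolding lp_gap_feasible_def by simp
  show "rfrac (proj_excess \<pi> A B) (proj_width \<pi> A) \<le> ereal eps"
  proof (cases "proj_width \<pi> A = \<infinity>")
    case True
    then show ?thesis using \<open>0 \<le> eps\<close> by (simp add: rfrac_def)
  next
    case False
    with proj_width_nonneg[OF assms(3), of \<pi>] obtain w where w: "proj_width \<pi> A = ereal w"
      by (cases "proj_width \<pi> A") auto
    have "proj_excess \<pi> A B \<le> ereal eps * ereal w"
      using proj_excess_le_gap_width[OF assms, of c w] w \<pi> by simp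
    moreover have "0 \<le> proj_excess \<pi> A B"
      using proj_excess_nonneg assms(3,4) by blast
    ultimately show ?thesis
      using rfrac_le_ereal_iff[of _ "ereal w" eps] w \<open>0 \<le> eps\<close> proj_width_nonneg[OF assms(3), of \<pi>]
      by simp
  qed
qed

lemma rdist_nonneg:
  assumes "A \<noteq> {}" "B \<noteq> {}"
  shows "0 \<le> rdist A B"
  unfolding rdist_def
  by (rule SUP_upper2[of "\<lambda>x. 0"])
    (use assms in \<open>auto simp: rfrac_def linear_zero zero_ereal_def[symmetric]\<close>)

lemma lp_gap_feasible_rdist:
  fixes A B :: "(real^'d) set"
  assumes "A \<noteq> {}" "A \<subseteq> B" "\<forall>x\<in>B. nonneg_vec x" "down_closed A"
    and "rdist A B = ereal r"
  shows "lp_gap_feasible A B r"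
  unfolding lp_gap_feasible_def
proof (intro conjI allI impI)
  show "0 \<le> r" using rdist_nonneg[of A B] assms by auto
  fix c :: "real^'d" assume "nonneg_vec c"
  have "linear (inner c)" by (rule bounded_linear.linear[OF bounded_linear_inner_right])
  then have "rfrac (proj_excess (inner c) A B) (proj_width (inner c) A) \<le> ereal r"
    unfolding assms(5)[symmetric] rdist_eq_SUP_rfrac by (auto intro: SUP_upper)
  with assms(1-4) \<open>nonneg_vec c\<close> \<open>0 \<le> r\<close>
  show "support_fun c B \<le> ereal (1 + r) * support_fun c A"
    by (rule support_fun_le_if_rfrac_le)
qed

theorem mainTheorem5:
  fixes A B :: "(real^'d) set"
  assumes "A \<noteq> {}" and "B \<noteq> {}"
    and "convex A" and "convex B"
    and "A \<subseteq> B" and "\<forall>x\<in>B. nonneg_vec x"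
    and "down_closed A"
  shows "rdist A B = LPgapMax A B"
proof (rule antisym)
  show "rdist A B \<le> LPgapMax A B"
    unfolding LPgapMax_eq_Inf_feasible
    using rdist_le_if_lp_gap_feasible[OF assms(3,7,1,5,6)] by (auto intro: Inf_greatest)
  show "LPgapMax A B \<le> rdist A B"
  proof (cases "rdist A B")
    case (real r)
    then have "lp_gap_feasible A B r"
      using assms(1,5,6,7) by (intro lp_gap_feasible_rdist)
    then show ?thesis unfolding LPgapMax_eq_Inf_feasible real by (auto intro: Inf_lower)
  qed (use rdist_nonneg[OF assms(1,2)] in auto)
qed

end
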